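(* Let $\bar\alpha\in\mathcal{P}$ and $\bar\ell\in\mathcal{L}$. The subspace $$V_0=\langle e_{\alpha\alpha},\ e^1_{\bar\alpha}-e^1_\alpha,\ e^2_{\bar\alpha}-e^2_\alpha,\ e_{\bar\ell}-e_\ell\mid \alpha\in\mathcal{P},\ \ell\in\mathcal{L}\rangle$$ of $V$ has dimension $4(q^2+q)+1$ and is contained in the right kernel of $M$; in particular $V_0$ is contained in the kernel of $N=M^TM$.
   Context: $q$ is a prime power, $G=\mathrm{PGL}_3(q)$ acts on the point set $\mathcal{P}$ (the $1$-dimensional subspaces of $\mathrm{GF}(q)^3$) and line set $\mathcal{L}$ (the $2$-dimensional subspaces, viewed as sets of points) of $\mathrm{PG}_2(q)$. $M$ is the $\{0,1\}$-matrix with rows indexed by the derangements $g\in G$ (elements fixing no point), columns indexed by $(\alpha,\beta)\in\mathcal{P}^2$, and $M_{g,(\alpha,\beta)}=1$ iff $\alpha^g=\beta$. $V$ is the complex vector space with basis $\{e_{\alpha\beta}:(\alpha,\beta)\in\mathcal{P}^2\}$. $e^1_\alpha=\sum_{\beta\in\mathcal{P}}e_{\alpha\beta}$, $e^2_\alpha=\sum_{\beta\in\mathcal{P}}e_{\beta\alpha}$, $e_\ell=\sum_{\beta,\beta'\in\ell}e_{\beta\beta'}$. *)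

theory Defs
  imports "HOL-Analysis.Analysis" "HOL-Library.Function_Algebras"
begin

text \<open>Projective plane PG(2,q) over a finite field 'a (q = CARD('a)).
  Vectors of GF(q)^3 are elements of type 'a^3.\<close>

definition pg_point_of :: "('a::field)^3 \<Rightarrow> ('a^3) set" where
  "pg_point_of v = {x. \<exists>c. x = (\<chi> i. c * v $ i)}"

definition pg_points :: "('a::field^3) set set" where
  "pg_points = {pg_point_of v | v. v \<noteq> 0}"

definition pg_span2 :: "('a::field)^3 \<Rightarrow> 'a^3 \<Rightarrow> ('a^3) set" where
  "pg_span2 u w = {x. \<exists>a b. x = (\<chi> i. a * u $ i + b * w $ i)}"

definition pg_lines :: "('a::field^3) set set set" where
  "pg_lines = {{p \<in> pg_points. p \<subseteq> pg_span2 u w} | u w.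
                 u \<noteq> 0 \<and> w \<notin> pg_point_of u}"

text \<open>PGL_3(q), represented faithfully as the permutation group it induces on the points:
  the map induced by an invertible matrix A is alpha |-> A alpha.\<close>
definition pgl3 :: "(('a::field^3) set \<Rightarrow> ('a^3) set) set" where
  "pgl3 = {restrict (\<lambda>\<alpha>. (\<lambda>x. A *v x) ` \<alpha>) pg_points | A :: 'a^3^3. invertible A}"

definition derangements :: "(('a::field^3) set \<Rightarrow> ('a^3) set) set" where
  "derangements = {g \<in> pgl3. \<forall>\<alpha>\<in>pg_points. g \<alpha> \<noteq> \<alpha>}"

type_synonym 'a Vsp = "(('a^3) set \<times> ('a^3) set) \<Rightarrow> complex"

definition Mmat :: "(('a::field^3) set \<Rightarrow> ('a^3) set) \<Rightarrow> ('a^3) set \<times> ('a^3) set \<Rightarrow> complex" where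
  "Mmat g ab = (if fst ab \<in> pg_points \<and> snd ab \<in> pg_points \<and> g (fst ab) = snd ab then 1 else 0)"

definition M_apply :: "('a::{finite,field}) Vsp \<Rightarrow> (('a^3) set \<Rightarrow> ('a^3) set) \<Rightarrow> complex" where
  "M_apply v g = (\<Sum>ab \<in> pg_points \<times> pg_points. Mmat g ab * v ab)"

definition N_apply :: "('a::{finite,field}) Vsp \<Rightarrow> 'a Vsp" where
  "N_apply v ab = (\<Sum>g \<in> derangements. Mmat g ab * M_apply v g)"

definition right_kernel_M :: "('a::{finite,field}) Vsp set" where
  "right_kernel_M = {v. (\<forall>ab. ab \<notin> pg_points \<times> pg_points \<longrightarrow> v ab = 0)
                        \<and> (\<forall>g \<in> derangements. M_apply v g = 0)}"

definition kernel_N :: "('a::{finite,field}) Vsp set" where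
  "kernel_N = {v. (\<forall>ab. ab \<notin> pg_points \<times> pg_points \<longrightarrow> v ab = 0)
                  \<and> (\<forall>ab \<in> pg_points \<times> pg_points. N_apply v ab = 0)}"

definition e_pair :: "('a::field^3) set \<Rightarrow> ('a^3) set \<Rightarrow> 'a Vsp" where
  "e_pair \<alpha> \<beta> = (\<lambda>ab. if ab = (\<alpha>, \<beta>) then 1 else 0)"

definition e1 :: "('a::field^3) set \<Rightarrow> 'a Vsp" where
  "e1 \<alpha> = (\<lambda>(x, y). if x = \<alpha> \<and> y \<in> pg_points then 1 else 0)"

definition e2 :: "('a::field^3) set \<Rightarrow> 'a Vsp" where
  "e2 \<alpha> = (\<lambda>(x, y). if x \<in> pg_points \<and> y = \<alpha> then 1 else 0)"

definition e_line :: "('a::field^3) set set \<Rightarrow> 'a Vsp" where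
  "e_line l = (\<lambda>(x, y). if x \<in> l \<and> y \<in> l then 1 else 0)"

definition cscale :: "complex \<Rightarrow> 'a Vsp \<Rightarrow> 'a Vsp" where
  "cscale c f = (\<lambda>x. c * f x)"

definition V0 :: "('a::field^3) set \<Rightarrow> ('a^3) set set \<Rightarrow> 'a Vsp set" where
  "V0 \<alpha>b lb = module.span cscale
     ({e_pair \<alpha> \<alpha> | \<alpha>. \<alpha> \<in> pg_points}
      \<union> {e1 \<alpha>b - e1 \<alpha> | \<alpha>. \<alpha> \<in> pg_points}
      \<union> {e2 \<alpha>b - e2 \<alpha> | \<alpha>. \<alpha> \<in> pg_points}
      \<union> {e_line lb - e_line l | l. l \<in> pg_lines})"

end

theory Submission
  imports Defs
begin

text \<open>A projectivity \<open>g\<close> induced by a matrix \<open>A\<close> that moves every point also moves every line: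
  a plane invariant under \<open>A\<^sup>-\<^sup>1\<close> contains an eigenvector, i.e. a point fixed by \<open>g\<close>. Hence a
  line \<open>l\<close> meets its preimage under a derangement in exactly one point, so \<open>M e\<^sub>l\<close> is the all-ones
  vector; so are \<open>M e\<^sup>1\<^sub>\<alpha>\<close> and \<open>M e\<^sup>2\<^sub>\<alpha>\<close>, while \<open>M e\<^sub>\<alpha>\<^sub>\<alpha> = 0\<close>. Thus the generators of \<open>V\<^sub>0\<close> lie in
  the kernel of \<open>M\<close>, which is contained in that of \<open>N = M\<^sup>TM\<close>.

  The \<open>4(q\<^sup>2+q)+1\<close> nonzero generators are linearly independent. A vanishing combination,
  evaluated at \<open>(x,y)\<close> with \<open>x \<noteq> y\<close> on the line \<open>l\<close>, gives \<open>f x + g y + k l = 0\<close>. Comparing two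
  points of a line with a third one shows that \<open>f\<close> and \<open>g\<close> are constant, and a function
  \<open>\<Sum>\<^sub>s\<^sub>\<noteq>\<^sub>a b\<^sub>s (\<delta>\<^sub>a - \<delta>\<^sub>s)\<close> is constant only if all \<open>b\<^sub>s\<close> vanish (in characteristic 0). Then \<open>k\<close> is
  constant as well, and evaluation on the diagonal disposes of the coefficients of the \<open>e\<^sub>\<alpha>\<^sub>\<alpha>\<close>.\<close>


section \<open>Points of the projective plane\<close>

lemma mem_pg_point_of: "x \<in> pg_point_of v \<longleftrightarrow> (\<exists>c. x = c *s v)"
  by (simp add: pg_point_of_def vector_scalar_mult_def)

lemma mem_pg_span2: "x \<in> pg_span2 u w \<longleftrightarrow> (\<exists>a b. x = a *s u + b *s w)"
proof -
  have "(\<chi> i. a * u $ i + b * w $ i) = a *s u + b *s w" for a b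
    by (simp add: vec_eq_iff)
  thus ?thesis by (simp add: pg_span2_def)
qed

lemma zero_in_pg_point_of [simp]: "0 \<in> pg_point_of v"
  unfolding mem_pg_point_of by (rule exI[of _ 0]) simp

lemma self_in_pg_point_of [simp]: "v \<in> pg_point_of v"
  unfolding mem_pg_point_of by (rule exI[of _ 1]) simp

lemma pg_point_of_eq_range: "pg_point_of v = range (\<lambda>c. c *s v)"
  by (auto simp: mem_pg_point_of intro: rangeI)

lemma card_pg_point_of:
  fixes v :: "'a::{finite,field}^3"
  assumes "v \<noteq> 0" shows "card (pg_point_of v) = CARD('a)"
proof -
  have "inj (\<lambda>c. c *s v)"
    using assms by (auto intro: injI)
  thus ?thesis by (simp add: pg_point_of_eq_range card_image)
qed

lemma image_mult_pg_point_of: "(\<lambda>x. C *v x) ` pg_point_of v = pg_point_of (C *v v)"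
  for C :: "'a::field^3^3"
  by (simp add: pg_point_of_eq_range image_image vector_scalar_commute)

lemma pg_point_of_eq:
  fixes v :: "'a::field^3"
  assumes "w \<in> pg_point_of v" "w \<noteq> 0" shows "pg_point_of w = pg_point_of v"
proof -
  obtain c where c: "w = c *s v" using assms(1) by (auto simp: mem_pg_point_of)
  with assms(2) have "c \<noteq> 0" by auto
  show ?thesis
  proof (rule set_eqI)
    fix x
    have "d *s w = (d * c) *s v" "d *s v = (d / c) *s w" for d
      using \<open>c \<noteq> 0\<close> by (simp_all add: c vector_smult_assoc)
    thus "x \<in> pg_point_of w \<longleftrightarrow> x \<in> pg_point_of v"
      unfolding mem_pg_point_of by metis
  qed
qed

lemma mem_pg_points: "p \<in> pg_points \<longleftrightarrow> (\<exists>v. v \<noteq> 0 \<and> p = pg_point_of v)"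
  by (auto simp: pg_points_def)

lemma pg_point_of_in_pg_points: "v \<noteq> 0 \<Longrightarrow> pg_point_of v \<in> pg_points"
  unfolding mem_pg_points by blast

lemma pg_point_eq_pg_point_of:
  assumes "p \<in> pg_points" "x \<in> p" "x \<noteq> 0" shows "p = pg_point_of x"
  using assms pg_point_of_eq by (fastforce simp: mem_pg_points)

lemma zero_in_pg_point: "p \<in> pg_points \<Longrightarrow> 0 \<in> p"
  by (auto simp: mem_pg_points)

lemma two_le_card_field: "CARD('a::{finite,field}) \<ge> 2"
proof -
  have "card {0, 1::'a} \<le> CARD('a)" by (intro card_mono) auto
  thus ?thesis by simp
qed

text \<open>The points inside a cone \<open>S\<close> partition its nonzero vectors into classes of size \<open>q - 1\<close>.\<close>

lemma card_pg_points_in_cone: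
  fixes S :: "('a::{finite,field}^3) set"
  assumes "0 \<in> S" "\<And>x c. x \<in> S \<Longrightarrow> c *s x \<in> S"
  shows "(CARD('a) - 1) * card {p \<in> pg_points. p \<subseteq> S} = card S - 1"
proof -
  let ?C = "{p \<in> pg_points. p \<subseteq> S}" and ?punct = "\<lambda>p. p - {0}"
  have inj: "inj_on ?punct ?C"
  proof (rule inj_onI)
    fix p p' assume "p \<in> ?C" "p' \<in> ?C" "p - {0} = p' - {0}"
    thus "p = p'" using zero_in_pg_point by blast
  qed
  have union: "\<Union>(?punct ` ?C) = S - {0}"
  proof
    show "S - {0} \<subseteq> \<Union>(?punct ` ?C)"
    proof
      fix x assume x: "x \<in> S - {0}"
      hence "pg_point_of x \<in> ?C" using assms(2) by (auto simp: mem_pg_points mem_pg_point_of)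
      moreover have "x \<in> pg_point_of x - {0}" using x by simp
      ultimately show "x \<in> \<Union>(?punct ` ?C)" by blast
    qed
  qed auto
  have "(CARD('a) - 1) * card (?punct ` ?C) = card (\<Union>(?punct ` ?C))"
  proof (rule card_partition)
    show "card c = CARD('a) - 1" if c: "c \<in> ?punct ` ?C" for c
    proof -
      obtain p where "p \<in> pg_points" "c = p - {0}" using c by auto
      moreover from this obtain v where "v \<noteq> 0" "p = pg_point_of v" by (auto simp: mem_pg_points)
      ultimately show ?thesis by (simp add: card_pg_point_of)
    qed
    show "c1 \<inter> c2 = {}" if c: "c1 \<in> ?punct ` ?C" "c2 \<in> ?punct ` ?C" "c1 \<noteq> c2" for c1 c2
    proof -
      obtain p1 p2 where "p1 \<in> pg_points" "p2 \<in> pg_points" "c1 = p1 - {0}" "c2 = p2 - {0}"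
        using c(1,2) by auto
      thus ?thesis using c(3) pg_point_eq_pg_point_of by blast
    qed
  qed simp_all
  thus ?thesis using inj union assms(1) by (simp add: card_image card_Diff_singleton)
qed

lemma card_pg_points:
  "card (pg_points :: ('a::{finite,field}^3) set set) = CARD('a)^2 + CARD('a) + 1"
proof -
  let ?q = "CARD('a)"
  have "(?q - 1) * card {p \<in> (pg_points :: ('a^3) set set). p \<subseteq> UNIV} = card (UNIV :: ('a^3) set) - 1"
    by (rule card_pg_points_in_cone) auto
  hence "(?q - 1) * card (pg_points :: ('a^3) set set) = ?q^3 - 1" by simp
  moreover obtain m where m: "?q = Suc (Suc m)"
    using two_le_card_field[where 'a='a] by (metis add_2_eq_Suc le_iff_add)
  moreover have "(?q - 1) * (?q^2 + ?q + 1) = ?q^3 - 1"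
    unfolding m by (simp add: algebra_simps power2_eq_square power3_eq_cube)
  ultimately show ?thesis by (metis mult_left_cancel Zero_neq_Suc diff_Suc_1)
qed


section \<open>Lines of the projective plane\<close>

abbreviation indep_pair :: "'a::field^3 \<Rightarrow> 'a^3 \<Rightarrow> bool" where
  "indep_pair u w \<equiv> u \<noteq> 0 \<and> w \<notin> pg_point_of u"

definition pg_line_of :: "'a::field^3 \<Rightarrow> 'a^3 \<Rightarrow> ('a^3) set set" where
  "pg_line_of u w = {p \<in> pg_points. p \<subseteq> pg_span2 u w}"

lemma mem_pg_lines: "l \<in> pg_lines \<longleftrightarrow> (\<exists>u w. indep_pair u w \<and> l = pg_line_of u w)"
  by (auto simp: pg_lines_def pg_line_of_def)

lemma indep_pair_lincomb_eq_0:
  assumes "indep_pair u w" "a *s u + b *s w = 0" shows "a = 0 \<and> b = 0"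
proof -
  have "b = 0"
  proof (rule ccontr)
    assume "b \<noteq> 0"
    hence "w = (- a / b) *s u" using assms(2)
      by (simp add: vec_eq_iff field_simps)
        (metis add.commute add_eq_0_iff2 minus_mult_left vector_add_component
          vector_smult_component zero_index)
    thus False using assms(1) unfolding mem_pg_point_of by blast
  qed
  thus ?thesis using assms by simp
qed

lemma card_pg_span2:
  fixes u w :: "'a::{finite,field}^3"
  assumes "indep_pair u w" shows "card (pg_span2 u w) = CARD('a)^2"
proof -
  have span: "pg_span2 u w = (\<lambda>(a,b). a *s u + b *s w) ` UNIV"
    by (fastforce simp: mem_pg_span2 image_iff)
  have "inj (\<lambda>(a::'a,b::'a). a *s u + b *s w)"
  proof (rule injI, clarsimp)
    fix a b a' b' :: 'a assume "a *s u + b *s w = a' *s u + b' *s w"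
    hence "(a - a') *s u + (b - b') *s w = 0" by (simp add: vec_eq_iff algebra_simps)
    from indep_pair_lincomb_eq_0[OF assms this] show "a = a' \<and> b = b'" by simp
  qed
  thus ?thesis unfolding span by (simp add: card_image power2_eq_square)
qed

lemma card_pg_span2_less:
  fixes u w :: "'a::{finite,field}^3"
  assumes "indep_pair u w" shows "card (pg_span2 u w) < CARD('a^3)"
proof -
  have "CARD('a)^2 * 1 < CARD('a)^2 * CARD('a)"
    using two_le_card_field[where 'a='a] by (intro mult_strict_left_mono) auto
  thus ?thesis using card_pg_span2[OF assms] by (simp add: power2_eq_square power3_eq_cube)
qed

lemma pg_span2_lincomb:
  assumes "x \<in> pg_span2 u w" "y \<in> pg_span2 u w" shows "a *s x + b *s y \<in> pg_span2 u w"
proof -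
  obtain a1 b1 a2 b2 where "x = a1 *s u + b1 *s w" "y = a2 *s u + b2 *s w"
    using assms by (auto simp: mem_pg_span2)
  hence "a *s x + b *s y = (a*a1 + b*a2) *s u + (a*b1 + b*b2) *s w"
    by (simp add: vec_eq_iff algebra_simps)
  thus ?thesis unfolding mem_pg_span2 by blast
qed

lemma left_in_pg_span2 [simp]: "u \<in> pg_span2 u w"
  unfolding mem_pg_span2 by (rule exI[of _ 1], rule exI[of _ 0]) simp

lemma right_in_pg_span2 [simp]: "w \<in> pg_span2 u w"
  unfolding mem_pg_span2 by (rule exI[of _ 0], rule exI[of _ 1]) simp

lemma zero_in_pg_span2 [simp]: "0 \<in> pg_span2 u w"
  unfolding mem_pg_span2 by (rule exI[of _ 0], rule exI[of _ 0]) simp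

lemma pg_span2_scale: "x \<in> pg_span2 u w \<Longrightarrow> c *s x \<in> pg_span2 u w"
  using pg_span2_lincomb[of x u w x c 0] by simp

lemma pg_span2_add: "x \<in> pg_span2 u w \<Longrightarrow> y \<in> pg_span2 u w \<Longrightarrow> x + y \<in> pg_span2 u w"
  using pg_span2_lincomb[of x u w y 1 1] by simp

lemma pg_span2_diff: "x \<in> pg_span2 u w \<Longrightarrow> y \<in> pg_span2 u w \<Longrightarrow> x - y \<in> pg_span2 u w"
  using pg_span2_lincomb[of x u w y 1 "-1"] by (simp add: vector_smult_lneg)

lemma pg_span2_eq:
  fixes u w :: "'a::{finite,field}^3"
  assumes "indep_pair u w" "indep_pair x y" "x \<in> pg_span2 u w" "y \<in> pg_span2 u w"
  shows "pg_span2 x y = pg_span2 u w"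
proof -
  have "pg_span2 x y \<subseteq> pg_span2 u w"
    using assms(3,4) pg_span2_lincomb by (auto simp: mem_pg_span2[of _ x y])
  thus ?thesis using card_pg_span2[OF assms(1)] card_pg_span2[OF assms(2)]
    by (simp add: card_subset_eq)
qed

lemma pg_point_of_subset_pg_span2_iff: "pg_point_of x \<subseteq> pg_span2 u w \<longleftrightarrow> x \<in> pg_span2 u w"
  using pg_span2_scale self_in_pg_point_of by (auto simp: mem_pg_point_of)

lemma Union_pg_line_of:
  assumes "indep_pair u w" shows "\<Union>(pg_line_of u w) = pg_span2 u w"
proof
  show "pg_span2 u w \<subseteq> \<Union>(pg_line_of u w)"
  proof
    fix x assume x: "x \<in> pg_span2 u w"
    show "x \<in> \<Union>(pg_line_of u w)"
    proof (cases "x = 0")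
      case True
      have "pg_point_of u \<in> pg_line_of u w"
        using assms by (auto simp: pg_line_of_def mem_pg_points pg_point_of_subset_pg_span2_iff)
      thus ?thesis using True zero_in_pg_point_of by blast
    next
      case False
      have "pg_point_of x \<in> pg_line_of u w"
        using x False by (auto simp: pg_line_of_def mem_pg_points pg_point_of_subset_pg_span2_iff)
      thus ?thesis using self_in_pg_point_of by blast
    qed
  qed
qed (auto simp: pg_line_of_def)

lemma card_pg_line_of:
  fixes u w :: "'a::{finite,field}^3"
  assumes "indep_pair u w" shows "card (pg_line_of u w) = CARD('a) + 1"
proof -
  let ?q = "CARD('a)"
  have "(?q - 1) * card {p \<in> (pg_points :: ('a^3) set set). p \<subseteq> pg_span2 u w}
      = card (pg_span2 u w) - 1"
    by (rule card_pg_points_in_cone) (auto simp: pg_span2_scale)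
  hence "(?q - 1) * card (pg_line_of u w) = ?q^2 - 1"
    by (simp add: pg_line_of_def card_pg_span2[OF assms])
  moreover obtain m where m: "?q = Suc (Suc m)"
    using two_le_card_field[where 'a='a] by (metis add_2_eq_Suc le_iff_add)
  moreover have "(?q - 1) * (?q + 1) = ?q^2 - 1"
    unfolding m by (simp add: algebra_simps power2_eq_square)
  ultimately show ?thesis by (metis mult_left_cancel Zero_neq_Suc diff_Suc_1)
qed

lemma card_pg_line: "l \<in> pg_lines \<Longrightarrow> card (l :: ('a::{finite,field}^3) set set) = CARD('a) + 1"
  using card_pg_line_of by (auto simp: mem_pg_lines)

lemma pg_line_subset_pg_points: "l \<in> pg_lines \<Longrightarrow> l \<subseteq> pg_points"
  by (auto simp: mem_pg_lines pg_line_of_def)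

lemma indep_pair_if_pg_point_of_neq:
  assumes "v \<noteq> 0" "v' \<noteq> 0" "pg_point_of v \<noteq> pg_point_of v'" shows "indep_pair v v'"
  using assms pg_point_of_eq by metis

lemma pg_line_through_two_points:
  assumes "x \<in> pg_points" "y \<in> pg_points" "x \<noteq> y"
  shows "\<exists>l\<in>pg_lines. x \<in> l \<and> y \<in> l"
proof -
  obtain v v' where v: "v \<noteq> 0" "x = pg_point_of v" "v' \<noteq> 0" "y = pg_point_of v'"
    using assms by (auto simp: mem_pg_points)
  hence "pg_line_of v v' \<in> pg_lines"
    using assms indep_pair_if_pg_point_of_neq unfolding mem_pg_lines by metis
  moreover have "x \<in> pg_line_of v v'" "y \<in> pg_line_of v v'"
    using assms v by (auto simp: pg_line_of_def pg_point_of_subset_pg_span2_iff)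
  ultimately show ?thesis by blast
qed

lemma pg_line_unique:
  fixes x :: "('a::{finite,field}^3) set"
  assumes "x \<in> pg_points" "y \<in> pg_points" "x \<noteq> y" "l \<in> pg_lines" "l' \<in> pg_lines"
    "x \<in> l" "y \<in> l" "x \<in> l'" "y \<in> l'"
  shows "l = l'"
proof -
  obtain v v' where v: "v \<noteq> 0" "x = pg_point_of v" "v' \<noteq> 0" "y = pg_point_of v'"
    using assms by (auto simp: mem_pg_points)
  hence indep: "indep_pair v v'" using assms indep_pair_if_pg_point_of_neq by metis
  have "l = pg_line_of v v'" if l: "l \<in> pg_lines" "x \<in> l" "y \<in> l" for l
  proof -
    obtain u w where uw: "indep_pair u w" "l = pg_line_of u w" using l by (auto simp: mem_pg_lines)
    have "v \<in> pg_span2 u w" "v' \<in> pg_span2 u w"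
      using l uw v by (auto simp: pg_line_of_def pg_point_of_subset_pg_span2_iff)
    hence "pg_span2 v v' = pg_span2 u w" using pg_span2_eq uw indep by blast
    thus ?thesis using uw by (simp add: pg_line_of_def)
  qed
  thus ?thesis using assms by metis
qed

text \<open>Two planes of \<open>GF(q)\<^sup>3\<close> meet nontrivially: the difference map on \<open>W \<times> W'\<close> cannot be
  injective, as \<open>q\<^sup>4 > q\<^sup>3\<close>.\<close>

lemma pg_lines_meet:
  fixes l :: "('a::{finite,field}^3) set set"
  assumes "l \<in> pg_lines" "l' \<in> pg_lines" shows "\<exists>p. p \<in> l \<and> p \<in> l'"
proof -
  obtain u w u' w' where uw: "indep_pair u w" "l = pg_line_of u w" "indep_pair u' w'" "l' = pg_line_of u' w'"
    using assms by (auto simp: mem_pg_lines)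
  let ?W = "pg_span2 u w" and ?W' = "pg_span2 u' w'"
  have "\<not> inj_on (\<lambda>(x,y). x - y) (?W \<times> ?W')"
  proof
    assume inj: "inj_on (\<lambda>(x,y). x - y) (?W \<times> ?W')"
    have "card (?W \<times> ?W') \<le> card (UNIV :: ('a^3) set)"
      by (rule card_inj_on_le[OF inj]) auto
    moreover have "card (?W \<times> ?W') = CARD('a)^3 * CARD('a)"
      using card_pg_span2[OF uw(1)] card_pg_span2[OF uw(3)]
      by (simp add: card_cartesian_product power2_eq_square power3_eq_cube)
    moreover have "CARD('a)^3 * 1 < CARD('a)^3 * CARD('a)"
      using two_le_card_field[where 'a='a] by (intro mult_strict_left_mono) auto
    ultimately show False by simp
  qed
  then obtain x y x' y' where xy: "x \<in> ?W" "y \<in> ?W'" "x' \<in> ?W" "y' \<in> ?W'" "(x,y) \<noteq> (x',y')"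
    "x - y = x' - y'" unfolding inj_on_def by auto
  let ?v = "x - x'"
  have v': "?v = y - y'" using xy(6) by (simp add: algebra_simps)
  hence "?v \<noteq> 0" using xy(5) by auto
  moreover have "?v \<in> ?W" "?v \<in> ?W'"
    using pg_span2_diff[OF xy(1,3)] pg_span2_diff[OF xy(2,4)] v' by simp_all
  ultimately have "pg_point_of ?v \<in> l" "pg_point_of ?v \<in> l'"
    using uw by (auto simp: pg_line_of_def pg_point_of_subset_pg_span2_iff pg_point_of_in_pg_points)
  thus ?thesis by blast
qed

lemma pg_line_third_point:
  fixes l :: "('a::{finite,field}^3) set set"
  assumes "l \<in> pg_lines" shows "\<exists>z\<in>l. z \<noteq> x \<and> z \<noteq> y"
proof (rule ccontr)
  assume "\<not> ?thesis"
  hence "card l \<le> card {x,y}" by (intro card_mono) auto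
  also have "\<dots> \<le> 2" by (simp add: card_insert_if)
  finally show False using card_pg_line[OF assms] two_le_card_field[where 'a='a] by simp
qed

lemma card_off_diagonal:
  assumes "finite S"
  shows "card {(x,y). x \<in> S \<and> y \<in> S \<and> x \<noteq> y} = card S * card S - card S"
proof -
  have "{(x,y). x \<in> S \<and> y \<in> S \<and> x \<noteq> y} = S \<times> S - (\<lambda>x. (x,x)) ` S" by auto
  moreover have "card ((\<lambda>x. (x,x)) ` S) = card S" by (rule card_image) (auto intro: inj_onI)
  ultimately show ?thesis using assms
    by (simp add: card_Diff_subset card_cartesian_product image_subset_iff)
qed

text \<open>Count ordered pairs of distinct points: each lies on exactly one of the lines, each of
  which carries \<open>(q + 1) q\<close> of them.\<close>

lemma card_pg_lines:
  "card (pg_lines :: ('a::{finite,field}^3) set set set) = CARD('a)^2 + CARD('a) + 1"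
proof -
  let ?q = "CARD('a)"
  let ?P = "pg_points :: ('a^3) set set" and ?L = "pg_lines :: ('a^3) set set set"
  let ?OD = "\<lambda>S. {(x,y). x \<in> S \<and> y \<in> S \<and> x \<noteq> y}"
  have union: "?OD ?P = (\<Union>l\<in>?L. ?OD l)"
  proof
    show "?OD ?P \<subseteq> (\<Union>l\<in>?L. ?OD l)"
    proof
      fix xy assume "xy \<in> ?OD ?P"
      then obtain x y where xy: "xy = (x,y)" "x \<in> ?P" "y \<in> ?P" "x \<noteq> y" by auto
      then obtain l where "l \<in> ?L" "x \<in> l" "y \<in> l" using pg_line_through_two_points by blast
      thus "xy \<in> (\<Union>l\<in>?L. ?OD l)" using xy by blast
    qed
  qed (use pg_line_subset_pg_points in blast)
  have disjoint: "?OD l \<inter> ?OD l' = {}" if "l \<in> ?L" "l' \<in> ?L" "l \<noteq> l'" for l l'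
  proof (rule ccontr)
    assume "?OD l \<inter> ?OD l' \<noteq> {}"
    then obtain x y where "x \<in> l" "y \<in> l" "x \<in> l'" "y \<in> l'" "x \<noteq> y" by auto
    moreover have "x \<in> ?P" "y \<in> ?P" using calculation that pg_line_subset_pg_points by auto
    ultimately show False using pg_line_unique that by metis
  qed
  have "card (?OD ?P) = (\<Sum>l\<in>?L. card (?OD l))"
    unfolding union by (rule card_UN_disjoint) (simp_all add: disjoint)
  also have "\<dots> = (\<Sum>l\<in>?L. ?q * (?q + 1))"
    by (rule sum.cong) (simp_all add: card_off_diagonal card_pg_line algebra_simps)
  finally have "card ?L * (?q * (?q + 1)) = (?q^2 + ?q + 1) * (?q * (?q + 1))"
    using card_off_diagonal[of ?P] by (simp add: card_pg_points algebra_simps power2_eq_square)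
  moreover have "?q * (?q + 1) \<noteq> 0" using two_le_card_field[where 'a='a] by simp
  ultimately show ?thesis by (metis mult_right_cancel)
qed


section \<open>Projectivities\<close>

lemma lincomb3_surj:
  fixes u w z :: "'a::{finite,field}^3"
  assumes indep: "indep_pair u w" and z: "z \<notin> pg_span2 u w"
  shows "\<exists>a b c. x = a *s u + b *s w + c *s z"
proof -
  let ?T = "\<lambda>(a::'a,b::'a,c::'a). a *s u + b *s w + c *s z"
  have "inj ?T"
  proof (rule injI, clarsimp)
    fix a b c a' b' c' :: 'a
    assume eq: "a *s u + b *s w + c *s z = a' *s u + b' *s w + c' *s z"
    have "c = c'"
    proof (rule ccontr)
      assume "c \<noteq> c'"
      have "(1 / (c - c')) * (c - c') = 1" using \<open>c \<noteq> c'\<close> by simp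
      hence "z = (1 / (c - c')) *s ((c - c') *s z)"
        by (simp only: vector_smult_assoc vector_smult_lid)
      also have "(c - c') *s z = (a' - a) *s u + (b' - b) *s w"
        using eq by (simp add: vec_eq_iff algebra_simps)
      finally have "z = (1 / (c - c')) *s ((a' - a) *s u + (b' - b) *s w)" .
      moreover have "(1 / (c - c')) *s ((a' - a) *s u + (b' - b) *s w) \<in> pg_span2 u w"
        by (intro pg_span2_scale pg_span2_lincomb) auto
      ultimately show False using z by simp
    qed
    hence "(a - a') *s u + (b - b') *s w = 0" using eq by (simp add: vec_eq_iff algebra_simps)
    with indep_pair_lincomb_eq_0[OF indep this] \<open>c = c'\<close> show "a = a' \<and> b = b' \<and> c = c'" by simp
  qed
  hence "card (range ?T) = card (UNIV :: ('a^3) set)"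
    by (simp add: card_image power3_eq_cube)
  hence "range ?T = UNIV" by (simp add: card_subset_eq)
  thus ?thesis by (metis (no_types, lifting) UNIV_I case_prod_conv imageE prod.collapse)
qed

text \<open>A matrix leaving a plane \<open>W\<close> invariant acts on \<open>GF(q)\<^sup>3/W\<close> as a scalar \<open>\<mu>\<close>, so \<open>C - \<mu>\<close> maps
  everything into \<open>W\<close> and hence has a nontrivial kernel.\<close>

lemma eigenvector_if_invariant_plane:
  fixes u w :: "'a::{finite,field}^3" and C :: "'a^3^3"
  assumes indep: "indep_pair u w" and inv: "\<And>x. x \<in> pg_span2 u w \<Longrightarrow> C *v x \<in> pg_span2 u w"
  shows "\<exists>v \<mu>. v \<noteq> 0 \<and> C *v v = \<mu> *s v"
proof -
  let ?W = "pg_span2 u w"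
  have "\<not> UNIV \<subseteq> ?W"
    using card_mono[of ?W UNIV] card_pg_span2_less[OF indep] by auto
  then obtain z where z: "z \<notin> ?W" by blast
  obtain a0 b0 \<mu> where Cz: "C *v z = a0 *s u + b0 *s w + \<mu> *s z"
    using lincomb3_surj[OF indep z] by blast
  let ?D = "\<lambda>x. C *v x - \<mu> *s x"
  have D_W: "?D x \<in> ?W" for x
  proof -
    obtain a b c where x: "x = a *s u + b *s w + c *s z"
      using lincomb3_surj[OF indep z] by blast
    have "?D x = (a *s (C *v u) + b *s (C *v w)) + (c *s (a0 *s u + b0 *s w) - \<mu> *s (a *s u + b *s w))"
      unfolding x by (simp add: algebra_simps vector_scalar_commute Cz vec_eq_iff)
    moreover have "a *s (C *v u) + b *s (C *v w) \<in> ?W" by (intro pg_span2_lincomb inv) auto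
    moreover have "c *s (a0 *s u + b0 *s w) \<in> ?W" "\<mu> *s (a *s u + b *s w) \<in> ?W"
      by (intro pg_span2_scale pg_span2_lincomb; simp)+
    ultimately show ?thesis by (simp add: pg_span2_add pg_span2_diff)
  qed
  have "\<not> inj ?D"
  proof
    assume "inj ?D"
    hence "card (range ?D) = card (UNIV :: ('a^3) set)" by (simp add: card_image)
    moreover have "card (range ?D) \<le> card ?W" using D_W by (intro card_mono) auto
    ultimately show False using card_pg_span2_less[OF indep] by simp
  qed
  then obtain x y where "x \<noteq> y" "?D x = ?D y" unfolding inj_def by blast
  hence "x - y \<noteq> 0" "C *v (x - y) = \<mu> *s (x - y)" by (simp_all add: algebra_simps vec_eq_iff)
  thus ?thesis by blast
qed

locale projectivity =
  fixes A B :: "'a::{finite,field}^3^3"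
  assumes right_inverse: "A ** B = mat 1" and left_inverse: "B ** A = mat 1"
begin

definition act :: "('a^3) set \<Rightarrow> ('a^3) set" where
  "act = restrict (\<lambda>\<alpha>. (\<lambda>x. A *v x) ` \<alpha>) pg_points"

lemma inverse_mult_cancel [simp]: "B *v (A *v x) = x"
  by (simp add: matrix_vector_mul_assoc left_inverse)

lemma mult_inverse_cancel [simp]: "A *v (B *v x) = x"
  by (simp add: matrix_vector_mul_assoc right_inverse)

lemma mult_neq_0: "x \<noteq> 0 \<Longrightarrow> A *v x \<noteq> 0"
  by (metis inverse_mult_cancel matrix_vector_mult_0_right)

lemma inverse_mult_neq_0: "x \<noteq> 0 \<Longrightarrow> B *v x \<noteq> 0"
  by (metis mult_inverse_cancel matrix_vector_mult_0_right)

lemma act_pg_point_of: "v \<noteq> 0 \<Longrightarrow> act (pg_point_of v) = pg_point_of (A *v v)"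
  by (simp add: act_def pg_point_of_in_pg_points image_mult_pg_point_of)

lemma act_in_pg_points:
  assumes "p \<in> pg_points" shows "act p \<in> pg_points"
proof -
  obtain v where "v \<noteq> 0" "p = pg_point_of v" using assms by (auto simp: mem_pg_points)
  thus ?thesis by (simp add: act_pg_point_of mult_neq_0 pg_point_of_in_pg_points)
qed

lemma inj_on_act: "inj_on act pg_points"
proof (rule inj_onI)
  fix p p' assume p: "p \<in> pg_points" "p' \<in> pg_points" "act p = act p'"
  obtain v v' where v: "v \<noteq> 0" "p = pg_point_of v" "v' \<noteq> 0" "p' = pg_point_of v'"
    using p by (auto simp: mem_pg_points)
  have "A *v v' \<in> pg_point_of (A *v v)"
    using p(3) v act_pg_point_of self_in_pg_point_of by metis
  then obtain c where "A *v v' = c *s (A *v v)" by (auto simp: mem_pg_point_of)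
  hence "B *v (A *v v') = B *v (c *s (A *v v))" by simp
  hence "v' \<in> pg_point_of v" by (auto simp: mem_pg_point_of vector_scalar_commute)
  thus "p = p'" using v pg_point_of_eq by metis
qed

lemma bij_betw_act: "bij_betw act pg_points pg_points"
proof -
  have "act ` pg_points = pg_points"
    by (rule endo_inj_surj) (auto simp: inj_on_act act_in_pg_points)
  thus ?thesis by (simp add: bij_betw_def inj_on_act)
qed

lemma mult_in_pg_span2_iff: "A *v v \<in> pg_span2 u w \<longleftrightarrow> v \<in> pg_span2 (B *v u) (B *v w)"
proof -
  have "A *v v = a *s u + b *s w \<longleftrightarrow> v = a *s (B *v u) + b *s (B *v w)" for a b
    by (metis inverse_mult_cancel mult_inverse_cancel matrix_vector_right_distrib
        vector_scalar_commute)
  thus ?thesis by (simp add: mem_pg_span2)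
qed

lemma indep_pair_inverse_mult: "indep_pair u w \<Longrightarrow> indep_pair (B *v u) (B *v w)"
  by (auto simp: inverse_mult_neq_0 mem_pg_point_of)
    (metis mult_inverse_cancel vector_scalar_commute)

lemma act_preimage_pg_line_of:
  assumes "indep_pair u w"
  shows "{x \<in> pg_points. act x \<in> pg_line_of u w} = pg_line_of (B *v u) (B *v w)"
proof (rule set_eqI)
  fix x
  show "x \<in> {x \<in> pg_points. act x \<in> pg_line_of u w} \<longleftrightarrow> x \<in> pg_line_of (B *v u) (B *v w)"
  proof (cases "x \<in> pg_points")
    case True
    then obtain v where v: "v \<noteq> 0" "x = pg_point_of v" by (auto simp: mem_pg_points)
    have "act x \<in> pg_line_of u w \<longleftrightarrow> A *v v \<in> pg_span2 u w"
      using v mult_neq_0 by (simp add: pg_line_of_def act_pg_point_of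
          pg_point_of_subset_pg_span2_iff pg_point_of_in_pg_points)
    also have "\<dots> \<longleftrightarrow> x \<in> pg_line_of (B *v u) (B *v w)"
      using v True by (simp add: mult_in_pg_span2_iff pg_line_of_def pg_point_of_subset_pg_span2_iff)
    finally show ?thesis using True by simp
  qed (auto simp: pg_line_of_def)
qed

lemma fixed_point_if_invariant_line:
  assumes l: "l \<in> pg_lines" and invariant: "{x \<in> pg_points. act x \<in> l} = l"
  shows "\<exists>p\<in>pg_points. act p = p"
proof -
  obtain u w where uw: "indep_pair u w" "l = pg_line_of u w" using l by (auto simp: mem_pg_lines)
  have "pg_line_of (B *v u) (B *v w) = pg_line_of u w"
    using invariant act_preimage_pg_line_of[OF uw(1)] uw(2) by simp
  hence span_eq: "pg_span2 (B *v u) (B *v w) = pg_span2 u w"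
    using Union_pg_line_of[OF uw(1)] Union_pg_line_of[OF indep_pair_inverse_mult[OF uw(1)]] by metis
  have "B *v x \<in> pg_span2 u w" if "x \<in> pg_span2 u w" for x
    using that mult_in_pg_span2_iff[of "B *v x" u w] span_eq by simp
  then obtain v \<mu> where v: "v \<noteq> 0" "B *v v = \<mu> *s v"
    using eigenvector_if_invariant_plane[OF uw(1)] by blast
  hence "\<mu> \<noteq> 0" using inverse_mult_neq_0 by force
  have "v = \<mu> *s (A *v v)"
    using v(2) mult_inverse_cancel[of v] by (simp add: vector_scalar_commute)
  hence "(1 / \<mu>) *s v = (1 / \<mu>) *s (\<mu> *s (A *v v))" by simp
  also have "\<dots> = A *v v" using \<open>\<mu> \<noteq> 0\<close> by (simp add: vector_smult_assoc)
  finally have "A *v v = (1 / \<mu>) *s v" by simp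
  hence "act (pg_point_of v) = pg_point_of v"
    using v \<open>\<mu> \<noteq> 0\<close> by (simp add: act_pg_point_of pg_point_of_eq mem_pg_point_of)
  thus ?thesis using pg_point_of_in_pg_points[OF v(1)] by blast
qed

lemma card_meet_preimage_line:
  assumes derangement: "\<forall>p\<in>pg_points. act p \<noteq> p" and l: "l \<in> pg_lines"
  shows "card {x \<in> l. act x \<in> l} = 1"
proof -
  obtain u w where uw: "indep_pair u w" "l = pg_line_of u w" using l by (auto simp: mem_pg_lines)
  let ?l' = "{x \<in> pg_points. act x \<in> l}"
  have l': "?l' \<in> pg_lines"
    using act_preimage_pg_line_of[OF uw(1)] indep_pair_inverse_mult[OF uw(1)] uw(2)
    by (auto simp: mem_pg_lines)
  have "?l' \<noteq> l" using fixed_point_if_invariant_line[OF l] derangement by blast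
  obtain p where p: "p \<in> l" "p \<in> ?l'" using pg_lines_meet[OF l l'] by blast
  have "{x \<in> l. act x \<in> l} = {p}"
  proof (intro equalityI subsetI)
    fix p' assume p': "p' \<in> {x \<in> l. act x \<in> l}"
    show "p' \<in> {p}"
    proof (rule ccontr)
      assume "p' \<notin> {p}"
      hence "l = ?l'" using pg_line_unique[OF _ _ _ l l'] p p' pg_line_subset_pg_points[OF l] by blast
      thus False using \<open>?l' \<noteq> l\<close> by simp
    qed
  qed (use p in auto)
  thus ?thesis by simp
qed

end

lemma pgl3_projectivity:
  assumes "g \<in> pgl3"
  obtains A B :: "'a::{finite,field}^3^3" where "projectivity A B" "g = projectivity.act A"
proof -
  obtain A :: "'a^3^3" where A: "invertible A" "g = restrict (\<lambda>\<alpha>. (\<lambda>x. A *v x) ` \<alpha>) pg_points"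
    using assms unfolding pgl3_def by blast
  then obtain B where B: "projectivity A B"
    unfolding invertible_def projectivity_def by blast
  moreover have "g = projectivity.act A" using A(2) projectivity.act_def[OF B] by simp
  ultimately show ?thesis using that by blast
qed

lemma pgl3_in_pg_points:
  assumes "g \<in> pgl3" "p \<in> pg_points" shows "g p \<in> (pg_points :: ('a::{finite,field}^3) set set)"
proof -
  from assms(1) obtain A B :: "'a^3^3" where "projectivity A B" "g = projectivity.act A"
    by (rule pgl3_projectivity)
  thus ?thesis using projectivity.act_in_pg_points assms(2) by blast
qed

lemma pgl3_bij_betw:
  assumes "g \<in> pgl3" shows "bij_betw g pg_points (pg_points :: ('a::{finite,field}^3) set set)"
proof -
  from assms obtain A B :: "'a^3^3" where "projectivity A B" "g = projectivity.act A"
    by (rule pgl3_projectivity)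
  thus ?thesis using projectivity.bij_betw_act by blast
qed

lemma derangement_card_meet_preimage_line:
  assumes "g \<in> (derangements :: (('a::{finite,field}^3) set \<Rightarrow> _) set)" "l \<in> pg_lines"
  shows "card {x \<in> l. g x \<in> l} = 1"
proof -
  have "g \<in> pgl3" and no_fix: "\<forall>\<alpha>\<in>pg_points. g \<alpha> \<noteq> \<alpha>"
    using assms(1) by (simp_all add: derangements_def)
  from \<open>g \<in> pgl3\<close> obtain A B :: "'a^3^3" where P: "projectivity A B" and g: "g = projectivity.act A"
    by (rule pgl3_projectivity)
  show ?thesis using projectivity.card_meet_preimage_line[OF P _ assms(2)] no_fix unfolding g by blast
qed


section \<open>The matrix \<open>M\<close>\<close>

interpretation vs: vector_space cscale
  by unfold_locales (auto simp: cscale_def fun_eq_iff algebra_simps)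

lemma cscale_apply [simp]: "cscale c f x = c * f x"
  by (simp add: cscale_def)

lemma sum_fun_apply: "finite A \<Longrightarrow> (\<Sum>a\<in>A. f a) x = (\<Sum>a\<in>A. f a x)"
  by (induction A rule: finite_induct) auto

lemma M_apply_pgl3:
  assumes "g \<in> pgl3"
  shows "M_apply v g = (\<Sum>x\<in>pg_points. v (x, g x))"
proof -
  have "M_apply v g = (\<Sum>x\<in>pg_points. \<Sum>y\<in>pg_points. Mmat g (x,y) * v (x,y))"
    unfolding M_apply_def by (simp add: sum.cartesian_product)
  also have "\<dots> = (\<Sum>x\<in>pg_points. \<Sum>y\<in>pg_points. if g x = y then v (x,y) else 0)"
    by (intro sum.cong refl) (auto simp: Mmat_def)
  also have "\<dots> = (\<Sum>x\<in>pg_points. v (x, g x))"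
    by (intro sum.cong refl) (simp add: pgl3_in_pg_points[OF assms])
  finally show ?thesis .
qed

lemma M_apply_zero [simp]: "M_apply 0 g = 0"
  by (simp add: M_apply_def)

lemma M_apply_add: "M_apply (f + h) g = M_apply f g + M_apply h g"
  by (simp add: M_apply_def distrib_left sum.distrib)

lemma M_apply_diff: "M_apply (f - h) g = M_apply f g - M_apply h g"
  by (simp add: M_apply_def right_diff_distrib sum_subtractf)

lemma M_apply_cscale: "M_apply (cscale c f) g = c * M_apply f g"
  by (simp add: M_apply_def sum_distrib_left mult.left_commute)

lemma derangements_pgl3: "g \<in> derangements \<Longrightarrow> g \<in> pgl3"
  by (simp add: derangements_def)

lemma M_apply_e_pair_diag:
  assumes "g \<in> derangements" shows "M_apply (e_pair \<alpha> \<alpha>) g = 0"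
  unfolding M_apply_pgl3[OF derangements_pgl3[OF assms]]
  using assms by (intro sum.neutral) (auto simp: e_pair_def derangements_def)

lemma M_apply_e1:
  assumes "g \<in> derangements" "\<alpha> \<in> pg_points" shows "M_apply (e1 \<alpha>) g = 1"
proof -
  have "M_apply (e1 \<alpha>) g = (\<Sum>x\<in>pg_points. if x = \<alpha> then 1 else 0)"
    unfolding M_apply_pgl3[OF derangements_pgl3[OF assms(1)]]
    by (intro sum.cong refl) (simp add: e1_def pgl3_in_pg_points derangements_pgl3[OF assms(1)])
  thus ?thesis using assms(2) by simp
qed

lemma M_apply_e2:
  assumes "g \<in> derangements" "\<alpha> \<in> pg_points" shows "M_apply (e2 \<alpha>) g = 1"
proof -
  have "M_apply (e2 \<alpha>) g = (\<Sum>x\<in>pg_points. if g x = \<alpha> then 1 else 0)"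
    unfolding M_apply_pgl3[OF derangements_pgl3[OF assms(1)]]
    by (intro sum.cong refl) (simp add: e2_def)
  also have "\<dots> = (\<Sum>y\<in>pg_points. if y = \<alpha> then 1 else 0)"
    using sum.reindex_bij_betw[OF pgl3_bij_betw[OF derangements_pgl3[OF assms(1)]],
        of "\<lambda>y. if y = \<alpha> then (1::complex) else 0"] by simp
  finally show ?thesis using assms(2) by simp
qed

lemma M_apply_e_line:
  assumes "g \<in> derangements" "l \<in> pg_lines" shows "M_apply (e_line l) g = 1"
proof -
  have "M_apply (e_line l) g = (\<Sum>x\<in>pg_points. if x \<in> {x \<in> l. g x \<in> l} then 1 else 0)"
    unfolding M_apply_pgl3[OF derangements_pgl3[OF assms(1)]]
    by (intro sum.cong refl) (simp add: e_line_def)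
  also have "\<dots> = of_nat (card (pg_points \<inter> {x \<in> l. g x \<in> l}))"
    by (simp add: sum.If_cases)
  also have "pg_points \<inter> {x \<in> l. g x \<in> l} = {x \<in> l. g x \<in> l}"
    using pg_line_subset_pg_points[OF assms(2)] by blast
  finally show ?thesis using derangement_card_meet_preimage_line[OF assms] by simp
qed

lemma subspace_right_kernel_M: "vs.subspace right_kernel_M"
  unfolding vs.subspace_def right_kernel_M_def
  by (simp add: M_apply_add M_apply_cscale)

lemma right_kernel_M_subset_kernel_N: "right_kernel_M \<subseteq> kernel_N"
  unfolding right_kernel_M_def kernel_N_def N_apply_def by auto


section \<open>The generators of \<open>V\<^sub>0\<close>\<close>

text \<open>Indices of the nonzero generators of \<open>V\<^sub>0\<close>: those belonging to the base point \<open>\<alpha>b\<close> and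
  the base line \<open>lb\<close> vanish.\<close>

datatype ('p, 'l) V0_index = Diag 'p | Row 'p | Col 'p | Line 'l

definition V0_gen :: "('a::field^3) set \<Rightarrow> ('a^3) set set \<Rightarrow> (('a^3) set, ('a^3) set set) V0_index \<Rightarrow> 'a Vsp"
  where "V0_gen \<alpha>b lb i = (case i of
      Diag \<alpha> \<Rightarrow> e_pair \<alpha> \<alpha>
    | Row \<alpha> \<Rightarrow> e1 \<alpha>b - e1 \<alpha>
    | Col \<alpha> \<Rightarrow> e2 \<alpha>b - e2 \<alpha>
    | Line l \<Rightarrow> e_line lb - e_line l)"

definition V0_indices :: "('a::field^3) set \<Rightarrow> ('a^3) set set \<Rightarrow> (('a^3) set, ('a^3) set set) V0_index set"
  where "V0_indices \<alpha>b lb = Diag ` pg_points \<union> Row ` (pg_points - {\<alpha>b})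
    \<union> Col ` (pg_points - {\<alpha>b}) \<union> Line ` (pg_lines - {lb})"

lemma finite_V0_indices: "finite (V0_indices \<alpha>b (lb :: ('a::{finite,field}^3) set set))"
  by (simp add: V0_indices_def)

lemma V0_eq_span_V0_gen: "V0 \<alpha>b lb = vs.span (V0_gen \<alpha>b lb ` V0_indices \<alpha>b lb)"
proof -
  let ?G = "{e_pair \<alpha> \<alpha> | \<alpha>. \<alpha> \<in> pg_points} \<union> {e1 \<alpha>b - e1 \<alpha> | \<alpha>. \<alpha> \<in> pg_points}
      \<union> {e2 \<alpha>b - e2 \<alpha> | \<alpha>. \<alpha> \<in> pg_points} \<union> {e_line lb - e_line l | l. l \<in> pg_lines}"
  have gens_sub: "V0_gen \<alpha>b lb ` V0_indices \<alpha>b lb \<subseteq> ?G"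
    by (auto simp: V0_indices_def V0_gen_def)
  have "?G \<subseteq> insert 0 (V0_gen \<alpha>b lb ` V0_indices \<alpha>b lb)"
  proof
    fix v assume "v \<in> ?G"
    then consider (Diag) \<alpha> where "\<alpha> \<in> pg_points" "v = e_pair \<alpha> \<alpha>"
      | (Row) \<alpha> where "\<alpha> \<in> pg_points" "v = e1 \<alpha>b - e1 \<alpha>"
      | (Col) \<alpha> where "\<alpha> \<in> pg_points" "v = e2 \<alpha>b - e2 \<alpha>"
      | (Line) l where "l \<in> pg_lines" "v = e_line lb - e_line l"
      by blast
    thus "v \<in> insert 0 (V0_gen \<alpha>b lb ` V0_indices \<alpha>b lb)"
    proof cases
      case Diag
      thus ?thesis by (auto simp: V0_indices_def V0_gen_def image_iff intro!: bexI[of _ "Diag \<alpha>"])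
    next
      case Row
      thus ?thesis by (cases "\<alpha> = \<alpha>b")
        (auto simp: V0_indices_def V0_gen_def image_iff intro!: bexI[of _ "Row \<alpha>"])
    next
      case Col
      thus ?thesis by (cases "\<alpha> = \<alpha>b")
        (auto simp: V0_indices_def V0_gen_def image_iff intro!: bexI[of _ "Col \<alpha>"])
    next
      case Line
      thus ?thesis by (cases "l = lb")
        (auto simp: V0_indices_def V0_gen_def image_iff intro!: bexI[of _ "Line l"])
    qed
  qed
  hence "vs.span ?G \<subseteq> vs.span (insert 0 (V0_gen \<alpha>b lb ` V0_indices \<alpha>b lb))"
    by (rule vs.span_mono)
  thus ?thesis unfolding V0_def using vs.span_mono[OF gens_sub] by simp
qed

lemma card_V0_indices:
  assumes "\<alpha>b \<in> pg_points" "lb \<in> pg_lines"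
  shows "card (V0_indices \<alpha>b (lb :: ('a::{finite,field}^3) set set)) = 4 * (CARD('a)^2 + CARD('a)) + 1"
proof -
  have inj: "inj_on Diag X" "inj_on Row X" "inj_on Col X" "inj_on Line Y" for X Y
    by (auto intro: inj_onI)
  have "card (V0_indices \<alpha>b lb) = card (pg_points :: ('a^3) set set)
      + (card (pg_points :: ('a^3) set set) - 1) + (card (pg_points :: ('a^3) set set) - 1)
      + (card (pg_lines :: ('a^3) set set set) - 1)"
    unfolding V0_indices_def by (subst card_Un_disjoint, simp, simp, fastforce)+
      (use assms in \<open>simp add: card_image inj card_Diff_singleton\<close>)
  thus ?thesis by (simp add: card_pg_points card_pg_lines)
qed

lemma right_kernel_MI:
  assumes "\<And>x y. (x, y) \<notin> pg_points \<times> pg_points \<Longrightarrow> v (x, y) = 0"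
    and "\<And>g. g \<in> derangements \<Longrightarrow> M_apply v g = 0"
  shows "v \<in> right_kernel_M"
  using assms by (auto simp: right_kernel_M_def)

lemma V0_gen_in_right_kernel_M:
  assumes \<alpha>b: "\<alpha>b \<in> pg_points" and lb: "lb \<in> pg_lines" and i: "i \<in> V0_indices \<alpha>b lb"
  shows "V0_gen \<alpha>b lb i \<in> (right_kernel_M :: ('a::{finite,field}) Vsp set)"
proof -
  from i consider (Diag) \<alpha> where "\<alpha> \<in> pg_points" "i = Diag \<alpha>"
    | (Row) \<alpha> where "\<alpha> \<in> pg_points" "i = Row \<alpha>"
    | (Col) \<alpha> where "\<alpha> \<in> pg_points" "i = Col \<alpha>"
    | (Line) l where "l \<in> pg_lines" "i = Line l"
    unfolding V0_indices_def by blast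
  thus ?thesis
  proof cases
    case Diag
    thus ?thesis
      by (intro right_kernel_MI) (simp_all add: V0_gen_def M_apply_e_pair_diag, auto simp: e_pair_def)
  next
    case Row
    thus ?thesis using \<alpha>b
      by (intro right_kernel_MI) (simp_all add: V0_gen_def M_apply_diff M_apply_e1, auto simp: e1_def)
  next
    case Col
    thus ?thesis using \<alpha>b
      by (intro right_kernel_MI) (simp_all add: V0_gen_def M_apply_diff M_apply_e2, auto simp: e2_def)
  next
    case Line
    thus ?thesis
      using lb pg_line_subset_pg_points[OF lb] pg_line_subset_pg_points[of l]
      by (intro right_kernel_MI)
        (simp_all add: V0_gen_def M_apply_diff M_apply_e_line, auto simp: e_line_def)
  qed
qed


section \<open>Linear independence of the generators\<close>

lemma (in vector_space) independent_image_if_scalars_zero: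
  assumes fin: "finite I" and zero: "\<And>c. (\<Sum>i\<in>I. scale (c i) (F i)) = 0 \<Longrightarrow> \<forall>i\<in>I. c i = 0"
  shows "independent (F ` I) \<and> card (F ` I) = card I"
proof -
  have inj: "inj_on F I"
  proof (rule inj_onI, rule ccontr)
    fix i j assume ij: "i \<in> I" "j \<in> I" "F i = F j" "i \<noteq> j"
    define c where "c k = (if k = i then 1 else if k = j then -1 else 0 :: 'a)" for k
    have "(\<Sum>k\<in>I. scale (c k) (F k))
        = (\<Sum>k\<in>I. (if k = i then F i else 0) - (if k = j then F j else 0))"
      using ij by (intro sum.cong) (auto simp: c_def)
    also have "\<dots> = 0" using ij fin by (simp add: sum_subtractf)
    finally have "\<forall>k\<in>I. c k = 0" by (rule zero)
    thus False using ij by (auto simp: c_def)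
  qed
  have "independent (F ` I)"
  proof (rule independent_if_scalars_zero)
    fix f x assume sum: "(\<Sum>x\<in>F ` I. scale (f x) x) = 0" and x: "x \<in> F ` I"
    have "(\<Sum>i\<in>I. scale (f (F i)) (F i)) = 0" using sum by (simp add: sum.reindex[OF inj])
    hence "\<forall>i\<in>I. f (F i) = 0" by (rule zero)
    thus "f x = 0" using x by blast
  qed (use fin in simp)
  thus ?thesis using inj by (simp add: card_image)
qed

definition diff_comb :: "'p set \<Rightarrow> 'p \<Rightarrow> ('p \<Rightarrow> 'c::ring_1) \<Rightarrow> 'p \<Rightarrow> 'c" where
  "diff_comb S a b x = (\<Sum>s\<in>S - {a}. b s * (of_bool (x = a) - of_bool (s = x)))"

lemma diff_comb_eq:
  assumes "finite S"
  shows "diff_comb S a b x = (if x = a then sum b (S - {a}) else 0) - (if x \<in> S - {a} then b x else 0)"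
proof -
  have "diff_comb S a b x = (\<Sum>s\<in>S - {a}. (if x = a then b s else 0) - (if s = x then b s else 0))"
    unfolding diff_comb_def by (intro sum.cong) auto
  also have "\<dots> = (\<Sum>s\<in>S - {a}. if x = a then b s else 0) - (\<Sum>s\<in>S - {a}. if s = x then b s else 0)"
    by (rule sum_subtractf)
  also have "\<dots> = (if x = a then sum b (S - {a}) else 0) - (if x \<in> S - {a} then b x else 0)"
    using assms by (cases "x = a") simp_all
  finally show ?thesis .
qed

lemma diff_comb_eq_0: "\<forall>s\<in>S - {a}. b s = 0 \<Longrightarrow> diff_comb S a b x = 0"
  unfolding diff_comb_def by (intro sum.neutral) simp

text \<open>With \<open>B = \<Sum>\<^sub>s b s\<close>, constancy means \<open>b s = -B\<close> for all \<open>s \<noteq> a\<close>, whence \<open>(1 + |S - {a}|) B = 0\<close>.\<close>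

lemma diff_comb_const_imp_zero:
  fixes b :: "'p \<Rightarrow> 'c::field_char_0"
  assumes fin: "finite S" and "a \<in> S" and const: "\<And>x. x \<in> S \<Longrightarrow> diff_comb S a b x = diff_comb S a b a"
  shows "\<forall>s\<in>S - {a}. b s = 0"
proof -
  let ?n = "of_nat (card (S - {a})) :: 'c" and ?B = "sum b (S - {a})"
  have b_eq: "b s = - ?B" if "s \<in> S - {a}" for s
  proof -
    have "- b s = ?B" using const[of s] that by (simp add: diff_comb_eq[OF fin])
    thus ?thesis by (metis minus_minus)
  qed
  have "?B = (\<Sum>s\<in>S - {a}. - ?B)" by (rule sum.cong[OF refl b_eq])
  also have "\<dots> = - (?n * ?B)" by simp
  finally have "(1 + ?n) * ?B = 0" by (simp add: distrib_right eq_neg_iff_add_eq_0)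
  moreover have "1 + ?n \<noteq> 0" using of_nat_neq_0[of "card (S - {a})"] by simp
  ultimately have "?B = 0" by simp
  show ?thesis
  proof
    fix s assume "s \<in> S - {a}"
    from b_eq[OF this] \<open>?B = 0\<close> show "b s = 0" by simp
  qed
qed

text \<open>Compare the flags \<open>(x, z, l)\<close> and \<open>(x', z, l)\<close>, with \<open>z\<close> a third point on the line \<open>l = xx'\<close>.\<close>

lemma flag_sum_zero_imp_const:
  fixes f g :: "('a::{finite,field}^3) set \<Rightarrow> 'c::ab_group_add"
  assumes flag: "\<And>x y l. x \<in> pg_points \<Longrightarrow> y \<in> pg_points \<Longrightarrow> x \<noteq> y \<Longrightarrow> l \<in> pg_lines
      \<Longrightarrow> x \<in> l \<Longrightarrow> y \<in> l \<Longrightarrow> f x + g y + k l = 0"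
    and x: "x \<in> pg_points" "x' \<in> pg_points"
  shows "f x = f x'"
proof (cases "x = x'")
  case False
  obtain l where l: "l \<in> pg_lines" "x \<in> l" "x' \<in> l"
    using pg_line_through_two_points[OF x False] by blast
  obtain z where z: "z \<in> l" "z \<noteq> x" "z \<noteq> x'" using pg_line_third_point[OF l(1)] by blast
  have "z \<in> pg_points" using pg_line_subset_pg_points[OF l(1)] z(1) by blast
  hence "f x + g z + k l = f x' + g z + k l"
    using flag[OF x(1) _ z(2)[symmetric] l(1,2) z(1)] flag[OF x(2) _ z(3)[symmetric] l(1,3) z(1)]
    by simp
  thus ?thesis by simp
qed simp

lemma e_line_apply_flag:
  fixes x :: "('a::{finite,field}^3) set"
  assumes "x \<in> pg_points" "y \<in> pg_points" "x \<noteq> y" "l \<in> pg_lines" "x \<in> l" "y \<in> l" "l' \<in> pg_lines"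
  shows "e_line l' (x, y) = of_bool (l' = l)"
  using assms pg_line_unique[of x y l l'] by (auto simp: e_line_def)

lemma sum_V0_indices:
  fixes \<phi> :: "(('a::{finite,field}^3) set, ('a^3) set set) V0_index \<Rightarrow> complex"
  shows "(\<Sum>i\<in>V0_indices \<alpha>b lb. \<phi> i) = (\<Sum>\<alpha>\<in>pg_points. \<phi> (Diag \<alpha>))
    + (\<Sum>\<alpha>\<in>pg_points - {\<alpha>b}. \<phi> (Row \<alpha>)) + (\<Sum>\<alpha>\<in>pg_points - {\<alpha>b}. \<phi> (Col \<alpha>))
    + (\<Sum>l\<in>pg_lines - {lb}. \<phi> (Line l))"
proof -
  have inj: "inj_on Diag X" "inj_on Row X" "inj_on Col X" "inj_on Line Y" for X Y
    by (auto intro: inj_onI)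
  show ?thesis
    unfolding V0_indices_def
    by (subst sum.union_disjoint, simp, simp, fastforce)+ (simp add: sum.reindex inj)
qed

lemma V0_comb_apply:
  fixes \<alpha>b :: "('a::{finite,field}^3) set"
  assumes x: "x \<in> pg_points" and y: "y \<in> pg_points"
  shows "(\<Sum>i\<in>V0_indices \<alpha>b lb. cscale (c i) (V0_gen \<alpha>b lb i)) (x, y)
    = of_bool (x = y) * c (Diag x) + diff_comb pg_points \<alpha>b (c \<circ> Row) x
      + diff_comb pg_points \<alpha>b (c \<circ> Col) y
      + (\<Sum>l\<in>pg_lines - {lb}. c (Line l) * (e_line lb (x, y) - e_line l (x, y)))"
proof -
  have diag: "(\<Sum>\<alpha>\<in>pg_points. c (Diag \<alpha>) * e_pair \<alpha> \<alpha> (x, y)) = of_bool (x = y) * c (Diag x)"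
  proof -
    have "(\<Sum>\<alpha>\<in>pg_points. c (Diag \<alpha>) * e_pair \<alpha> \<alpha> (x, y))
        = (\<Sum>\<alpha>\<in>pg_points. if \<alpha> = x then of_bool (x = y) * c (Diag x) else 0)"
      by (intro sum.cong) (auto simp: e_pair_def)
    thus ?thesis using x by simp
  qed
  have row: "(\<Sum>\<alpha>\<in>pg_points - {\<alpha>b}. c (Row \<alpha>) * (e1 \<alpha>b (x, y) - e1 \<alpha> (x, y)))
      = diff_comb pg_points \<alpha>b (c \<circ> Row) x"
    unfolding diff_comb_def using y by (intro sum.cong) (auto simp: e1_def)
  have col: "(\<Sum>\<alpha>\<in>pg_points - {\<alpha>b}. c (Col \<alpha>) * (e2 \<alpha>b (x, y) - e2 \<alpha> (x, y)))
      = diff_comb pg_points \<alpha>b (c \<circ> Col) y"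
    unfolding diff_comb_def using x by (intro sum.cong) (auto simp: e2_def)
  have "(\<Sum>i\<in>V0_indices \<alpha>b lb. cscale (c i) (V0_gen \<alpha>b lb i)) (x, y)
      = (\<Sum>i\<in>V0_indices \<alpha>b lb. c i * V0_gen \<alpha>b lb i (x, y))"
    by (simp add: sum_fun_apply finite_V0_indices)
  also have "\<dots> = (\<Sum>\<alpha>\<in>pg_points. c (Diag \<alpha>) * e_pair \<alpha> \<alpha> (x, y))
      + (\<Sum>\<alpha>\<in>pg_points - {\<alpha>b}. c (Row \<alpha>) * (e1 \<alpha>b (x, y) - e1 \<alpha> (x, y)))
      + (\<Sum>\<alpha>\<in>pg_points - {\<alpha>b}. c (Col \<alpha>) * (e2 \<alpha>b (x, y) - e2 \<alpha> (x, y)))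
      + (\<Sum>l\<in>pg_lines - {lb}. c (Line l) * (e_line lb (x, y) - e_line l (x, y)))"
    by (simp add: sum_V0_indices V0_gen_def)
  finally show ?thesis by (simp only: diag row col)
qed

lemma V0_comb_eq_0_flag:
  assumes lb: "lb \<in> pg_lines" and comb: "(\<Sum>i\<in>V0_indices \<alpha>b lb. cscale (c i) (V0_gen \<alpha>b lb i)) = 0"
    and flag: "x \<in> pg_points" "y \<in> pg_points" "x \<noteq> y" "l \<in> pg_lines" "x \<in> l" "y \<in> l"
  shows "diff_comb pg_points \<alpha>b (c \<circ> Row) x + diff_comb pg_points \<alpha>b (c \<circ> Col) y
      + diff_comb pg_lines lb (c \<circ> Line) (l :: ('a::{finite,field}^3) set set) = 0"
proof -
  have "(\<Sum>l'\<in>pg_lines - {lb}. c (Line l') * (e_line lb (x, y) - e_line l' (x, y)))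
      = diff_comb pg_lines lb (c \<circ> Line) l"
    unfolding diff_comb_def using flag lb
    by (intro sum.cong) (auto simp: e_line_apply_flag eq_commute[of l])
  thus ?thesis using V0_comb_apply[OF flag(1,2), where \<alpha>b = \<alpha>b and lb = lb and c = c] comb flag(3)
    by simp
qed

lemma V0_gen_scalars_zero:
  assumes \<alpha>b: "\<alpha>b \<in> pg_points" and lb: "lb \<in> pg_lines"
    and comb: "(\<Sum>i\<in>V0_indices \<alpha>b lb. cscale (c i) (V0_gen \<alpha>b lb i)) = 0"
  shows "\<forall>i\<in>V0_indices \<alpha>b (lb :: ('a::{finite,field}^3) set set). c i = 0"
proof -
  let ?P = "pg_points :: ('a^3) set set" and ?L = "pg_lines :: ('a^3) set set set"
  let ?row = "diff_comb ?P \<alpha>b (c \<circ> Row)" and ?col = "diff_comb ?P \<alpha>b (c \<circ> Col)"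
    and ?line = "diff_comb ?L lb (c \<circ> Line)"
  note flag = V0_comb_eq_0_flag[OF lb comb]
  have fin_P: "finite ?P" and fin_L: "finite ?L" by simp_all
  have "?row x = ?row \<alpha>b" if "x \<in> ?P" for x
    by (rule flag_sum_zero_imp_const[OF flag that \<alpha>b])
  hence row: "\<forall>\<alpha>\<in>?P - {\<alpha>b}. (c \<circ> Row) \<alpha> = 0"
    by (rule diff_comb_const_imp_zero[OF fin_P \<alpha>b])
  have flag': "?col y + ?row x + ?line l = 0"
    if "y \<in> ?P" "x \<in> ?P" "y \<noteq> x" "l \<in> ?L" "y \<in> l" "x \<in> l" for x y l
    using flag[of x y l] that by (simp add: algebra_simps)
  have "?col y = ?col \<alpha>b" if "y \<in> ?P" for y
    by (rule flag_sum_zero_imp_const[OF flag' that \<alpha>b])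
  hence col: "\<forall>\<alpha>\<in>?P - {\<alpha>b}. (c \<circ> Col) \<alpha> = 0"
    by (rule diff_comb_const_imp_zero[OF fin_P \<alpha>b])
  have "?line l = 0" if l: "l \<in> ?L" for l
  proof -
    obtain x where x: "x \<in> l" using pg_line_third_point[OF l] by blast
    obtain y where y: "y \<in> l" "y \<noteq> x" using pg_line_third_point[OF l, of x x] by blast
    have "x \<in> ?P" "y \<in> ?P" using x y pg_line_subset_pg_points[OF l] by blast+
    from flag[OF this y(2)[symmetric] l x y(1)] show ?thesis
      by (simp add: diff_comb_eq_0[OF row] diff_comb_eq_0[OF col])
  qed
  hence "?line l = ?line lb" if "l \<in> ?L" for l
    using that lb by simp
  hence line: "\<forall>l\<in>?L - {lb}. (c \<circ> Line) l = 0"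
    by (rule diff_comb_const_imp_zero[OF fin_L lb])
  have diag: "c (Diag x) = 0" if "x \<in> ?P" for x
  proof -
    have "(\<Sum>l\<in>?L - {lb}. c (Line l) * (e_line lb (x, x) - e_line l (x, x))) = 0"
      using line by (intro sum.neutral) simp
    with V0_comb_apply[OF that that, where \<alpha>b = \<alpha>b and lb = lb and c = c] comb show ?thesis
      by (simp add: diff_comb_eq_0[OF row] diff_comb_eq_0[OF col])
  qed
  show ?thesis using row col line diag by (auto simp: V0_indices_def)
qed

theorem mainTheorem11:
  fixes \<alpha>b :: "('a::{finite,field}^3) set" and lb :: "('a^3) set set"
  assumes "\<alpha>b \<in> pg_points" and "lb \<in> pg_lines"
  shows "vector_space.dim cscale (V0 \<alpha>b lb) = 4 * (CARD('a)^2 + CARD('a)) + 1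
         \<and> V0 \<alpha>b lb \<subseteq> right_kernel_M
         \<and> V0 \<alpha>b lb \<subseteq> kernel_N"
proof -
  let ?F = "V0_gen \<alpha>b lb ` V0_indices \<alpha>b lb"
  have indep: "vs.independent ?F \<and> card ?F = card (V0_indices \<alpha>b lb)"
    by (rule vs.independent_image_if_scalars_zero[OF finite_V0_indices])
      (rule V0_gen_scalars_zero[OF assms])
  hence "vs.dim (V0 \<alpha>b lb) = 4 * (CARD('a)^2 + CARD('a)) + 1"
    by (simp add: V0_eq_span_V0_gen vs.dim_eq_card_independent card_V0_indices[OF assms])
  moreover have "V0 \<alpha>b lb \<subseteq> right_kernel_M"
    unfolding V0_eq_span_V0_gen
    by (rule vs.span_minimal[OF _ subspace_right_kernel_M]) (use V0_gen_in_right_kernel_M[OF assms] in blast)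
  ultimately show ?thesis using right_kernel_M_subset_kernel_N by blast
qed

end
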